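(* Let $n\in\mathbb{N}^*$ and let $c\in\mathfrak{S}_{n+1}$ be a Coxeter element. The map $\Phi_c$, which sends $\boldsymbol\pi=(\pi^k)_{1\le k\le n}\in\mathcal{ST}(c)$ to the filling of $\boldsymbol\lambda(c)$ whose value at the box $\langle k,\delta\rangle_{\boldsymbol\lambda(c)}$ is $\pi^k_\delta$ (the $\delta$-th part of $\pi^k$, zero if $\delta>\ell(\pi^k)$), is a bijection from $\mathcal{ST}(c)$ onto $\mathrm{RPP}(\boldsymbol\lambda(c))$.
   Context: Coxeter element of $\mathfrak{S}_{n+1}$: product of $s_1,\dots,s_n$ ($s_i=(i,i+1)$), each exactly once; it is a long cycle $(c_1=1<c_2<\dots<c_m=n+1>c_{m+1}>\dots>c_{n+1})$, with $\mathbf L_c=\{c_2,\dots,c_{m-1}\}$, $\mathbf R_c=\{c_{m+1},\dots,c_{n+1}\}$. With $\mathbf L=\mathbf L_c\cup\{1\}=\{\ell_1<\dots<\ell_p\}$ and $\mathbf R=\mathbf R_c\cup\{n+1\}$, $\boldsymbol\lambda(c)$ is the partition with parts $\#\{r\in\mathbf R:\ell_i<r\}$. For a partition $\lambda$: $\mathrm{Fer}(\lambda)=\{(i,j):j\le\lambda_i\}$; $D_k(\lambda)=\{(i,j)\in\mathrm{Fer}(\lambda):\lambda_1+i-j=k\}$; $\delta_k=\max\{\min(i,j):(i,j)\in D_k(\lambda)\}$; the box $(i,j)\in D_k(\lambda)$ has coordinates $\langle k,\delta\rangle_\lambda$ with $\delta=\delta_k-\min(i,j)+1$. $\mathrm{RPP}(\lambda)$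 is the set of maps $\mathrm{Fer}(\lambda)\to\mathbb{N}$ weakly increasing for the componentwise order. Storability: a pair of partitions $(\lambda,\mu)$ (padded with zeros) is storable if $\lambda_i\ge\mu_i\ge\lambda_{i+1}$ for all $i\ge1$. A triple $(\lambda,\mu,\nu)$ is $(\boxplus,\boxplus)$-storable if $(\lambda,\mu),(\nu,\mu)$ are storable; $(\boxplus,\boxminus)$ if $(\lambda,\mu),(\mu,\nu)$ are; $(\boxminus,\boxplus)$ if $(\mu,\lambda),(\nu,\mu)$ are; $(\boxminus,\boxminus)$ if $(\mu,\lambda),(\mu,\nu)$ are. For $\boldsymbol\pi=(\pi^1,\dots,\pi^n)$ set $\pi^0=\pi^{n+1}=(0)$; $\boldsymbol\pi$ is $X$-storable at $i$ if $(\pi^{i-1},\pi^i,\pi^{i+1})$ is. With $\mathbf R[-1]=\{r-1:r\in\mathbf R\}$, $\boldsymbol\pi\in\mathcal{ST}(c)$ means that for each $i\in\{1,\dots,n\}$: $(\boxplus,\boxplus)$-storable at $i$ if $i\notin\mathbf L\cup\mathbf R[-1]$; $(\boxplus,\boxminus)$ at $i$ if $i\in\mathbf R[-1]\setminus\mathbf L$; $(\boxminus,\boxplus)$ at $i$ if $i\in\mathbf L\setminus\mathbf R[-1]$; $(\boxminus,\boxminus)$ at $i$ if $i\in\mathbf L\cap\mathbf R[-1]$; and $\pi^k=(0)$ for $k\notin\{\min\mathbf L,\dots,\max\mathbf R\}$. (For such $\boldsymbol\pi$, $\ell(\pi^k)\le\#D_k(\boldsymbol\lambda(c))$, so $\Phi_c$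 is well defined.) *)

theory Defs
  imports Main
begin

definition simple_transp :: "nat \<Rightarrow> nat \<Rightarrow> nat" where
  "simple_transp i x = (if x = i then Suc i else if x = Suc i then i else x)"

definition coxeter_elem :: "nat \<Rightarrow> (nat \<Rightarrow> nat) \<Rightarrow> bool" where
  "coxeter_elem n c \<longleftrightarrow>
     (\<exists>is. distinct is \<and> set is = {1..n} \<and> c = foldr (\<lambda>i f. simple_transp i \<circ> f) is id)"

text \<open>Writing c as the long cycle (c_1 = 1, c_2, ..., c_{n+1}) with c_{k+1} = c^k(1),
  and c_m = n+1: L_c = {c_2,...,c_{m-1}}, R_c = {c_{m+1},...,c_{n+1}}.\<close>
definition Lc :: "nat \<Rightarrow> (nat \<Rightarrow> nat) \<Rightarrow> nat set" where
  "Lc n c = {(c ^^ k) 1 | k. 0 < k \<and> k \<le> n \<and> (\<forall>j\<le>k. (c ^^ j) 1 \<noteq> n + 1)}"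

definition Rc :: "nat \<Rightarrow> (nat \<Rightarrow> nat) \<Rightarrow> nat set" where
  "Rc n c = {(c ^^ k) 1 | k. k \<le> n \<and> (\<exists>j<k. (c ^^ j) 1 = n + 1)}"

definition Lset :: "nat \<Rightarrow> (nat \<Rightarrow> nat) \<Rightarrow> nat set" where
  "Lset n c = Lc n c \<union> {1}"

definition Rset :: "nat \<Rightarrow> (nat \<Rightarrow> nat) \<Rightarrow> nat set" where
  "Rset n c = Rc n c \<union> {n + 1}"

definition is_partition :: "nat list \<Rightarrow> bool" where
  "is_partition xs \<longleftrightarrow> sorted (rev xs) \<and> 0 \<notin> set xs"

text \<open>The i-th part (1-indexed), zero beyond the length (padding with zeros).\<close>
definition part :: "nat list \<Rightarrow> nat \<Rightarrow> nat" where
  "part xs i = (if 1 \<le> i \<and> i \<le> length xs then xs ! (i - 1) else 0)"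

definition lam :: "nat \<Rightarrow> (nat \<Rightarrow> nat) \<Rightarrow> nat list" where
  "lam n c = map (\<lambda>l. card {r \<in> Rset n c. l < r}) (sorted_list_of_set (Lset n c))"

definition Fer :: "nat list \<Rightarrow> (nat \<times> nat) set" where
  "Fer la = {(i, j). 1 \<le> i \<and> 1 \<le> j \<and> j \<le> part la i}"

definition Dk :: "nat list \<Rightarrow> nat \<Rightarrow> (nat \<times> nat) set" where
  "Dk la k = {(i, j) \<in> Fer la. int (part la 1) + int i - int j = int k}"

definition delta :: "nat list \<Rightarrow> nat \<Rightarrow> nat" where
  "delta la k = Max ((\<lambda>(i, j). min i j) ` Dk la k)"

definition coord :: "nat list \<Rightarrow> nat \<times> nat \<Rightarrow> nat \<times> nat" where
  "coord la b = (case b of (i, j) \<Rightarrow>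
     (let k = part la 1 + i - j in (k, delta la k - min i j + 1)))"

definition RPP :: "nat list \<Rightarrow> (nat \<times> nat \<Rightarrow> nat) set" where
  "RPP la = {f. (\<forall>b. b \<notin> Fer la \<longrightarrow> f b = 0) \<and>
     (\<forall>i j i' j'. (i, j) \<in> Fer la \<longrightarrow> (i', j') \<in> Fer la \<longrightarrow> i \<le> i' \<longrightarrow> j \<le> j'
        \<longrightarrow> f (i, j) \<le> f (i', j'))}"

definition storable :: "nat list \<Rightarrow> nat list \<Rightarrow> bool" where
  "storable la mu \<longleftrightarrow> (\<forall>i\<ge>1. part mu i \<le> part la i \<and> part la (Suc i) \<le> part mu i)"

datatype box_sign = BPlus | BMinus

definition storable3 :: "box_sign \<Rightarrow> box_sign \<Rightarrow> nat list \<Rightarrow> nat list \<Rightarrow> nat list \<Rightarrow> bool" where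
  "storable3 X Y la mu nu \<longleftrightarrow>
     (if X = BPlus then storable la mu else storable mu la) \<and>
     (if Y = BPlus then storable nu mu else storable mu nu)"

text \<open>A tuple (pi^1,...,pi^n) is a list of length n; comp gives pi^k, with
  pi^k = (0) (the empty partition) for k outside {1..n}.\<close>
definition comp :: "nat \<Rightarrow> nat list list \<Rightarrow> nat \<Rightarrow> nat list" where
  "comp n ps k = (if 1 \<le> k \<and> k \<le> n then ps ! (k - 1) else [])"

definition ST :: "nat \<Rightarrow> (nat \<Rightarrow> nat) \<Rightarrow> nat list list set" where
  "ST n c = {ps. length ps = n \<and> (\<forall>p\<in>set ps. is_partition p) \<and>
     (\<forall>i\<in>{1..n}. storable3
         (if i \<in> Lset n c then BMinus else BPlus)
         (if i \<in> (\<lambda>r. r - 1) ` Rset n c then BMinus else BPlus)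
         (comp n ps (i - 1)) (comp n ps i) (comp n ps (i + 1))) \<and>
     (\<forall>k\<in>{1..n}. k \<notin> {Min (Lset n c)..Max (Rset n c)} \<longrightarrow> comp n ps k = [])}"

definition Phi :: "nat \<Rightarrow> (nat \<Rightarrow> nat) \<Rightarrow> nat list list \<Rightarrow> nat \<times> nat \<Rightarrow> nat" where
  "Phi n c ps b = (if b \<in> Fer (lam n c) then
     (case coord (lam n c) b of (k, d) \<Rightarrow> part (comp n ps k) d) else 0)"

end

theory Submission
  imports Defs
begin

text \<open>A Coxeter element is a long cycle, so \<open>L\<close> and \<open>R\<close> partition \<open>{1..n+1}\<close>. Write
  \<open>q = #R = \<lambda>\<^sub>1\<close> and \<open>rankL k = #{l \<in> L. l \<le> k}\<close>. Row \<open>i\<close> of \<open>Fer(\<lambda>(c))\<close> ends in column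
  \<open>q + i - \<ell>\<^sub>i\<close>, so a box \<open>(i, j)\<close> lies in the diagram iff \<open>i \<le> rankL (q + i - j)\<close>: the diagonal
  \<open>D\<^sub>k\<close> consists of the boxes \<open>(i, q + i - k)\<close> with \<open>i \<le> rankL k\<close>, and \<open>\<langle>k, \<delta>\<rangle>\<close> is the one
  in row \<open>rankL k + 1 - \<delta>\<close>. Passing from \<open>D\<^sub>k\<close> to \<open>D\<^sub>k\<^sub>+\<^sub>1\<close> moves \<open>\<langle>k, \<delta>\<rangle>\<close> one step down if
  \<open>k + 1 \<in> L\<close> and one step left otherwise, and the storability of \<open>(\<pi>\<^sup>k, \<pi>\<^sup>k\<^sup>+\<^sup>1)\<close> demanded
  by \<open>ST(c)\<close> is exactly the monotonicity of the filling along these unit steps. Storability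
  also propagates the emptiness of \<open>\<pi>\<^sup>0\<close> upwards and of \<open>\<pi>\<^sup>n\<^sup>+\<^sup>1\<close> downwards, which forces
  \<open>\<pi>\<^sup>k\<close> to have at most \<open>#D\<^sub>k\<close> parts and gives injectivity; reading a reverse plane
  partition diagonal by diagonal gives the inverse map.\<close>

section \<open>Coxeter elements are long cycles\<close>

definition transp_word :: "nat list \<Rightarrow> nat \<Rightarrow> nat" where
  "transp_word ws = foldr (\<lambda>i f. simple_transp i \<circ> f) ws id"

lemma coxeter_elem_transp_word:
  "coxeter_elem n c \<longleftrightarrow> (\<exists>ws. distinct ws \<and> set ws = {1..n} \<and> c = transp_word ws)"
  unfolding coxeter_elem_def transp_word_def ..

lemma transp_word_Nil [simp]: "transp_word [] = id"
  by (simp add: transp_word_def)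

lemma transp_word_Cons: "transp_word (i # ws) = simple_transp i \<circ> transp_word ws"
  by (simp add: transp_word_def)

lemma transp_word_append: "transp_word (xs @ ys) = transp_word xs \<circ> transp_word ys"
  by (induction xs) (simp_all add: transp_word_Cons comp_assoc)

lemma simple_transp_simple_transp [simp]: "simple_transp i (simple_transp i x) = x"
  by (simp add: simple_transp_def)

lemma inj_simple_transp: "inj (simple_transp i)"
  by (rule injI) (metis simple_transp_simple_transp)

lemma inj_transp_word: "inj (transp_word ws)"
proof (induction ws)
  case (Cons i ws)
  then show ?case unfolding transp_word_Cons by (rule inj_compose[OF inj_simple_transp])
qed simp

lemma simple_transp_image:
  assumes "1 \<le> i" "i < N" shows "simple_transp i ` {1..N} = {1..N}"
proof
  show sub: "simple_transp i ` {1..N} \<subseteq> {1..N}"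
    using assms by (auto simp: simple_transp_def)
  show "{1..N} \<subseteq> simple_transp i ` {1..N}"
    using sub by (metis image_eqI image_subset_iff simple_transp_simple_transp subsetI)
qed

lemma transp_word_image:
  "\<forall>i\<in>set ws. 1 \<le> i \<and> i < N \<Longrightarrow> transp_word ws ` {1..N} = {1..N}"
proof (induction ws)
  case (Cons i ws)
  have "transp_word (i # ws) ` {1..N} = simple_transp i ` (transp_word ws ` {1..N})"
    by (simp add: transp_word_Cons image_comp)
  with Cons show ?case using simple_transp_image[of i N] by simp
qed simp

lemma transp_word_fixes: "\<forall>i\<in>set ws. Suc i < x \<Longrightarrow> transp_word ws x = x"
  by (induction ws) (auto simp: transp_word_Cons simple_transp_def)

definition funpow_transitive_on :: "'a set \<Rightarrow> ('a \<Rightarrow> 'a) \<Rightarrow> bool" where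
  "funpow_transitive_on S f \<longleftrightarrow> (\<forall>x\<in>S. \<forall>y\<in>S. \<exists>k. (f ^^ k) x = y)"

lemma funpow_image_subset: "f ` S \<subseteq> S \<Longrightarrow> x \<in> S \<Longrightarrow> (f ^^ k) x \<in> S"
  by (induction k) auto

lemma funpow_conj_comm:
  assumes "c \<circ> w = w \<circ> c'" shows "(c ^^ k) (w x) = w ((c' ^^ k) x)"
  using fun_cong[OF assms] by (induction k) simp_all

lemma funpow_transitive_on_conj:
  assumes "c \<circ> w = w \<circ> c'" and "w ` S = S" and "funpow_transitive_on S c'"
  shows "funpow_transitive_on S c"
  unfolding funpow_transitive_on_def
proof (intro ballI)
  fix x y assume "x \<in> S" "y \<in> S"
  with assms(2) obtain x' y' where "x' \<in> S" "y' \<in> S" "x = w x'" "y = w y'"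
    by (metis imageE)
  with assms(3) obtain k where "(c' ^^ k) x' = y'"
    unfolding funpow_transitive_on_def by blast
  then have "(c ^^ k) x = y"
    using funpow_conj_comm[OF assms(1)] \<open>x = w x'\<close> \<open>y = w y'\<close> by simp
  then show "\<exists>k. (c ^^ k) x = y" ..
qed

lemma funpow_comp_simple_transp:
  assumes maps: "f ` {1..m} \<subseteq> {1..m}" and x: "x \<in> {1..m}" and avoid: "\<forall>j<k. (f ^^ j) x \<noteq> m"
  shows "((f \<circ> simple_transp m) ^^ k) x = (f ^^ k) x"
  using avoid
proof (induction k)
  case (Suc k)
  have "(f ^^ k) x \<in> {1..m}" using funpow_image_subset[OF maps x] .
  then have "simple_transp m ((f ^^ k) x) = (f ^^ k) x"
    using Suc.prems by (auto simp: simple_transp_def)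
  with Suc show ?case by simp
qed simp

lemma funpow_comp_simple_transp_to_top:
  assumes "1 \<le> m" and maps: "f ` {1..m} \<subseteq> {1..m}" and fix_top: "f (Suc m) = Suc m"
    and transitive: "funpow_transitive_on {1..m} f" and x: "x \<in> {1..m}"
  shows "\<exists>k. ((f \<circ> simple_transp m) ^^ k) x = Suc m"
proof -
  define t where "t = (LEAST t. (f ^^ t) x = m)"
  have "\<exists>t. (f ^^ t) x = m"
    using transitive x \<open>1 \<le> m\<close> unfolding funpow_transitive_on_def by simp
  then have "(f ^^ t) x = m" unfolding t_def by (rule LeastI_ex)
  moreover have "\<forall>j<t. (f ^^ j) x \<noteq> m" unfolding t_def using not_less_Least by blast
  ultimately have "((f \<circ> simple_transp m) ^^ t) x = m"
    using funpow_comp_simple_transp[OF maps x] by simp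
  then have "((f \<circ> simple_transp m) ^^ Suc t) x = Suc m" by (simp add: simple_transp_def fix_top)
  then show ?thesis ..
qed

text \<open>After leaving \<open>m + 1\<close> through \<open>f m\<close>, the orbit of \<open>f\<close> reaches every \<open>y\<close> before it
  can return to \<open>m\<close>, because \<open>f m\<close> lies on a cycle through \<open>m\<close>.\<close>
lemma funpow_comp_simple_transp_from_top:
  assumes "1 \<le> m" and maps: "f ` {1..m} \<subseteq> {1..m}"
    and transitive: "funpow_transitive_on {1..m} f" and y: "y \<in> {1..m}"
  shows "\<exists>k. ((f \<circ> simple_transp m) ^^ k) (Suc m) = y"
proof -
  have "m \<in> {1..m}" using \<open>1 \<le> m\<close> by simp
  then have fm: "f m \<in> {1..m}" using maps by blast
  define t where "t = (LEAST t. (f ^^ t) (f m) = y)"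
  have "\<exists>t. (f ^^ t) (f m) = y" using transitive fm y unfolding funpow_transitive_on_def by blast
  then have t: "(f ^^ t) (f m) = y" unfolding t_def by (rule LeastI_ex)
  have "(f ^^ j) (f m) \<noteq> m" if "j < t" for j
  proof
    assume "(f ^^ j) (f m) = m"
    then have "(f ^^ Suc j) (f m) = f m" by (simp add: funpow_swap1)
    from funpow_mod_eq[OF this, of t] t have "(f ^^ (t mod Suc j)) (f m) = y" by simp
    moreover have "t mod Suc j < t" using mod_less_divisor[of "Suc j" t] \<open>j < t\<close> by linarith
    ultimately show False unfolding t_def using not_less_Least by blast
  qed
  then have "((f \<circ> simple_transp m) ^^ t) (f m) = y"
    using funpow_comp_simple_transp[OF maps fm] t by simp
  then have "((f \<circ> simple_transp m) ^^ Suc t) (Suc m) = y"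
    by (simp add: funpow_swap1 simple_transp_def)
  then show ?thesis ..
qed

text \<open>Appending the new letter \<open>s\<^sub>m\<close> to a permutation that is transitive on \<open>{1..m}\<close>
  splices \<open>m + 1\<close> into the cycle right after \<open>m\<close>.\<close>
lemma funpow_transitive_on_extend:
  assumes "1 \<le> m" and "f ` {1..m} \<subseteq> {1..m}" and "f (Suc m) = Suc m"
    and "funpow_transitive_on {1..m} f"
  shows "funpow_transitive_on {1..Suc m} (f \<circ> simple_transp m)"
  unfolding funpow_transitive_on_def
proof (intro ballI)
  let ?g = "f \<circ> simple_transp m"
  fix x y assume x: "x \<in> {1..Suc m}" and y: "y \<in> {1..Suc m}"
  have "x = Suc m \<or> x \<in> {1..m}" "y = Suc m \<or> y \<in> {1..m}" using x y by auto
  then obtain a b where "(?g ^^ a) x = Suc m" "(?g ^^ b) (Suc m) = y"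
    using funpow_comp_simple_transp_to_top[OF assms]
      funpow_comp_simple_transp_from_top[OF assms(1,2,4)] by (metis funpow_0)
  then have "(?g ^^ (b + a)) x = y" by (simp add: funpow_add)
  then show "\<exists>k. (?g ^^ k) x = y" ..
qed

lemma coxeter_word_transitive:
  "distinct ws \<Longrightarrow> set ws = {1..n} \<Longrightarrow> funpow_transitive_on {1..Suc n} (transp_word ws)"
proof (induction n arbitrary: ws)
  case 0
  then show ?case unfolding funpow_transitive_on_def by (auto intro: exI[of _ 0])
next
  case (Suc m)
  then have "Suc m \<in> set ws" by simp
  then obtain u v where ws: "ws = u @ Suc m # v" by (meson split_list)
  have "set (v @ u) = set ws - {Suc m}" "distinct (v @ u)" using Suc.prems(1) unfolding ws by auto
  then have uv: "distinct (v @ u)" "set (v @ u) = {1..m}" using Suc.prems(2) by auto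
  define f where "f = transp_word (v @ u)"
  define w where "w = transp_word (u @ [Suc m])"
  have rotated: "funpow_transitive_on {1..Suc (Suc m)} (f \<circ> simple_transp (Suc m))"
  proof (rule funpow_transitive_on_extend)
    show "f ` {1..Suc m} \<subseteq> {1..Suc m}"
      unfolding f_def using uv(2) by (subst transp_word_image) auto
    show "f (Suc (Suc m)) = Suc (Suc m)"
      unfolding f_def using uv(2) by (intro transp_word_fixes) auto
    show "funpow_transitive_on {1..Suc m} f"
      unfolding f_def using Suc.IH[OF uv] .
  qed simp
  have "transp_word ws \<circ> w = w \<circ> (f \<circ> simple_transp (Suc m))"
    unfolding ws w_def f_def by (simp only: transp_word_append transp_word_Cons
        transp_word_Nil comp_id comp_assoc)
  moreover have "set (u @ [Suc m]) \<subseteq> {1..Suc m}" using Suc.prems(2) unfolding ws by auto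
  then have "w ` {1..Suc (Suc m)} = {1..Suc (Suc m)}"
    unfolding w_def by (intro transp_word_image) fastforce
  ultimately show ?case using rotated by (rule funpow_transitive_on_conj)
qed

lemma funpow_transitive_on_period:
  assumes "funpow_transitive_on S f" "x \<in> S" "(f ^^ d) x = x" "0 < d"
  shows "S \<subseteq> (\<lambda>k. (f ^^ k) x) ` {..<d}"
proof
  fix y assume "y \<in> S"
  with assms(1,2) obtain t where "(f ^^ t) x = y" unfolding funpow_transitive_on_def by blast
  then have "(f ^^ (t mod d)) x = y" using funpow_mod_eq[OF assms(3)] by simp
  then show "y \<in> (\<lambda>k. (f ^^ k) x) ` {..<d}" using assms(4) by force
qed

lemma funpow_transitive_on_orbit_bij:
  assumes "inj f" and maps: "f ` {1..Suc n} \<subseteq> {1..Suc n}"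
    and transitive: "funpow_transitive_on {1..Suc n} f"
  shows "bij_betw (\<lambda>k. (f ^^ k) 1) {0..n} {1..Suc n}"
proof -
  let ?orb = "\<lambda>k. (f ^^ k) 1"
  have inj: "inj_on ?orb {0..n}"
  proof (rule inj_onI, rule ccontr)
    fix a b assume "a \<in> {0..n}" "b \<in> {0..n}" "?orb a = ?orb b" "a \<noteq> b"
    then obtain a b where ab: "a < b" "b \<le> n" "?orb a = ?orb b"
      by (metis atLeastAtMost_iff linorder_neqE_nat)
    then have "(f ^^ a) ((f ^^ (b - a)) 1) = (f ^^ a) 1"
      by (metis add_diff_inverse_nat funpow_add less_imp_not_less o_apply)
    then have "(f ^^ (b - a)) 1 = 1" using inj_fn[OF \<open>inj f\<close>] by (meson injD)
    then have "{1..Suc n} \<subseteq> ?orb ` {..<b - a}"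
      using ab by (intro funpow_transitive_on_period[OF transitive]) auto
    from card_mono[OF _ this] have "Suc n \<le> card (?orb ` {..<b - a})" by simp
    also have "\<dots> \<le> b - a" using card_image_le[of "{..<b - a}" ?orb] by simp
    finally show False using ab by simp
  qed
  moreover have "?orb ` {0..n} \<subseteq> {1..Suc n}"
    using funpow_image_subset[OF maps] by auto
  moreover have "card (?orb ` {0..n}) = card {1..Suc n}"
    using card_image[OF inj] by simp
  ultimately show ?thesis
    unfolding bij_betw_def by (simp add: card_subset_eq)
qed

lemma coxeter_elem_orbit_bij:
  assumes "coxeter_elem n c"
  shows "bij_betw (\<lambda>k. (c ^^ k) 1) {0..n} {1..Suc n}"
proof -
  obtain ws where ws: "distinct ws" "set ws = {1..n}" "c = transp_word ws"
    using assms unfolding coxeter_elem_transp_word by blast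
  then have "c ` {1..Suc n} = {1..Suc n}" using transp_word_image[of ws "Suc n"] by auto
  then show ?thesis
    using funpow_transitive_on_orbit_bij inj_transp_word coxeter_word_transitive ws by simp
qed

lemma Lset_orbit:
  assumes inj: "inj_on (\<lambda>k. (c ^^ k) 1) {0..n}" and m: "m \<le> n" "(c ^^ m) 1 = Suc n" "m \<noteq> 0"
  shows "Lset n c = (\<lambda>k. (c ^^ k) 1) ` {0..<m}"
proof -
  let ?orb = "\<lambda>k. (c ^^ k) 1"
  have hit: "?orb j = Suc n \<longleftrightarrow> j = m" if "j \<le> n" for j
    using inj_onD[OF inj, of j m] m that by auto
  have "Lc n c = ?orb ` {1..<m}"
  proof (intro set_eqI iffI)
    fix x assume "x \<in> Lc n c"
    then obtain k where k: "x = ?orb k" "0 < k" "k \<le> n" "\<forall>j\<le>k. ?orb j \<noteq> Suc n"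
      unfolding Lc_def by auto
    then have "k < m" using m(2) by (meson not_le)
    with k show "x \<in> ?orb ` {1..<m}" by auto
  next
    fix x assume "x \<in> ?orb ` {1..<m}"
    then obtain k where k: "x = ?orb k" "0 < k" "k < m" by auto
    then have "\<forall>j\<le>k. ?orb j \<noteq> Suc n" using hit m(1) by auto
    with k m(1) show "x \<in> Lc n c" unfolding Lc_def by auto
  qed
  moreover have "{0..<m} = insert 0 {1..<m}" using m(3) by auto
  ultimately show ?thesis unfolding Lset_def by auto
qed

lemma Rset_orbit:
  assumes inj: "inj_on (\<lambda>k. (c ^^ k) 1) {0..n}" and m: "m \<le> n" "(c ^^ m) 1 = Suc n"
  shows "Rset n c = (\<lambda>k. (c ^^ k) 1) ` {m..n}"
proof -
  let ?orb = "\<lambda>k. (c ^^ k) 1"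
  have hit: "?orb j = Suc n \<longleftrightarrow> j = m" if "j \<le> n" for j
    using inj_onD[OF inj, of j m] m that by auto
  have "Rc n c = ?orb ` {m<..n}"
  proof (intro set_eqI iffI)
    fix x assume "x \<in> Rc n c"
    then obtain k j where "x = ?orb k" "k \<le> n" "j < k" "?orb j = Suc n"
      unfolding Rc_def by auto
    with hit show "x \<in> ?orb ` {m<..n}" by auto
  next
    fix x assume "x \<in> ?orb ` {m<..n}"
    then obtain k where "x = ?orb k" "m < k" "k \<le> n" by auto
    with m(2) show "x \<in> Rc n c" unfolding Rc_def by auto
  qed
  moreover have "{m..n} = insert m {m<..n}" using m(1) by auto
  ultimately show ?thesis unfolding Rset_def using m(2) by auto
qed

lemma coxeter_Lset_Rset:
  assumes "1 \<le> n" and "coxeter_elem n c"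
  shows "Lset n c \<union> Rset n c = {1..Suc n}" and "Lset n c \<inter> Rset n c = {}"
    and "1 \<in> Lset n c" and "Suc n \<in> Rset n c"
proof -
  let ?orb = "\<lambda>k. (c ^^ k) 1"
  have inj: "inj_on ?orb {0..n}" and img: "?orb ` {0..n} = {1..Suc n}"
    using coxeter_elem_orbit_bij[OF assms(2)] unfolding bij_betw_def by auto
  have "Suc n \<in> ?orb ` {0..n}" using img by simp
  then obtain m where m: "m \<le> n" "?orb m = Suc n" by auto
  moreover have "m \<noteq> 0" using m assms(1) by (cases m) auto
  ultimately have L: "Lset n c = ?orb ` {0..<m}" and R: "Rset n c = ?orb ` {m..n}"
    using Lset_orbit[OF inj] Rset_orbit[OF inj] by simp_all
  have "{0..<m} \<union> {m..n} = {0..n}" using m(1) by auto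
  then show "Lset n c \<union> Rset n c = {1..Suc n}"
    unfolding L R img[symmetric] image_Un[symmetric] by simp
  have "?orb ` {0..<m} \<inter> ?orb ` {m..n} = ?orb ` ({0..<m} \<inter> {m..n})"
    using inj m(1) by (intro inj_on_image_Int[symmetric]) auto
  moreover have "{0..<m} \<inter> {m..n} = {}" by auto
  ultimately show "Lset n c \<inter> Rset n c = {}" unfolding L R by simp
  show "1 \<in> Lset n c" "Suc n \<in> Rset n c" unfolding Lset_def Rset_def by auto
qed

section \<open>Sorted lists, monotone grids and partitions\<close>

lemma card_le_nth_sorted:
  fixes xs :: "'a::linorder list"
  assumes "sorted_wrt (<) xs" and "m < length xs"
  shows "card {x \<in> set xs. x \<le> xs ! m} = Suc m"
proof -
  have "{x \<in> set xs. x \<le> xs ! m} = (!) xs ` {..m}"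
  proof (intro set_eqI iffI)
    fix x assume "x \<in> {x \<in> set xs. x \<le> xs ! m}"
    then obtain i where "i < length xs" "x = xs ! i" "xs ! i \<le> xs ! m"
      by (auto simp: in_set_conv_nth)
    moreover have "i \<le> m"
      using sorted_wrt_nth_less[OF assms(1), of m i] calculation by (meson leD not_le)
    ultimately show "x \<in> (!) xs ` {..m}" by auto
  next
    fix x assume "x \<in> (!) xs ` {..m}"
    then obtain i where "i \<le> m" "x = xs ! i" by auto
    then show "x \<in> {x \<in> set xs. x \<le> xs ! m}"
      using sorted_wrt_nth_less[OF assms(1), of i m] assms(2) by (cases "i = m") auto
  qed
  moreover have "inj_on ((!) xs) {..m}"
    using assms by (intro inj_on_nth) (auto simp: strict_sorted_iff)
  ultimately show ?thesis by (simp add: card_image)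
qed

lemma mono_steps_down_closed:
  fixes g :: "nat \<Rightarrow> 'a::preorder"
  assumes step: "\<And>k. m \<le> k \<Longrightarrow> P (Suc k) \<Longrightarrow> P k \<and> g k \<le> g (Suc k)"
    and "m \<le> m'" "P m'"
  shows "P m \<and> g m \<le> g m'"
  using assms(2,3)
proof (induction m' rule: dec_induct)
  case (step k)
  from assms(1)[OF step.hyps(1) step.prems] have "P k" and le: "g k \<le> g (Suc k)" by simp_all
  with step.IH have "P m" and "g m \<le> g k" by simp_all
  from this(2) le have "g m \<le> g (Suc k)" by (rule order_trans)
  with \<open>P m\<close> show ?case ..
qed simp

lemma mono_grid:
  fixes f :: "nat \<times> nat \<Rightarrow> 'a::preorder"
  assumes right: "\<And>i j. (i, Suc j) \<in> F \<Longrightarrow> 1 \<le> j \<Longrightarrow> (i, j) \<in> F \<and> f (i, j) \<le> f (i, Suc j)"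
    and down: "\<And>i j. (Suc i, j) \<in> F \<Longrightarrow> 1 \<le> i \<Longrightarrow> (i, j) \<in> F \<and> f (i, j) \<le> f (Suc i, j)"
    and "(i', j') \<in> F" "1 \<le> i" "1 \<le> j" "i \<le> i'" "j \<le> j'"
  shows "f (i, j) \<le> f (i', j')"
proof -
  have "(i', j) \<in> F \<and> f (i', j) \<le> f (i', j')"
  proof (rule mono_steps_down_closed[where P = "\<lambda>j. (i', j) \<in> F" and g = "\<lambda>j. f (i', j)"])
    show "(i', k) \<in> F \<and> f (i', k) \<le> f (i', Suc k)" if "j \<le> k" "(i', Suc k) \<in> F" for k
      by (rule right[OF that(2)]) (use that(1) \<open>1 \<le> j\<close> in simp)
  qed (use assms(3,7) in simp_all)
  moreover have "f (i, j) \<le> f (i', j)"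
  proof (rule mono_steps_down_closed[where P = "\<lambda>i. (i, j) \<in> F" and g = "\<lambda>i. f (i, j)",
        THEN conjunct2])
    show "(k, j) \<in> F \<and> f (k, j) \<le> f (Suc k, j)" if "i \<le> k" "(Suc k, j) \<in> F" for k
      by (rule down[OF that(2)]) (use that(1) \<open>1 \<le> i\<close> in simp)
  qed (use assms(6) calculation in simp_all)
  ultimately show ?thesis using order_trans by (metis (no_types))
qed

lemma storable_le: "storable la mu \<Longrightarrow> 1 \<le> i \<Longrightarrow> part mu i \<le> part la i"
  and storable_ge_Suc: "storable la mu \<Longrightarrow> 1 \<le> i \<Longrightarrow> part la (Suc i) \<le> part mu i"
  unfolding storable_def by blast+

lemma part_Nil [simp]: "part [] d = 0"
  unfolding part_def by simp

lemma part_nonzero_iff: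
  assumes "is_partition xs" shows "part xs d \<noteq> 0 \<longleftrightarrow> 1 \<le> d \<and> d \<le> length xs"
proof -
  have "xs ! (d - 1) \<noteq> 0" if "1 \<le> d" "d \<le> length xs"
  proof -
    have "d - 1 < length xs" using that by linarith
    then have "xs ! (d - 1) \<in> set xs" by (rule nth_mem)
    then show ?thesis using assms unfolding is_partition_def by metis
  qed
  then show ?thesis unfolding part_def by auto
qed

lemma partition_eqI:
  assumes "is_partition xs" "is_partition ys" "\<And>d. part xs d = part ys d"
  shows "xs = ys"
proof -
  have iff: "1 \<le> d \<and> d \<le> length xs \<longleftrightarrow> 1 \<le> d \<and> d \<le> length ys" for d
    using part_nonzero_iff[OF assms(1), of d] part_nonzero_iff[OF assms(2), of d] assms(3)[of d]
    by simp
  have len: "length xs = length ys"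
    using iff[of "length xs"] iff[of "length ys"] by presburger
  show ?thesis
  proof (rule nth_equalityI[OF len])
    fix t assume "t < length xs"
    then show "xs ! t = ys ! t" using assms(3)[of "Suc t"] len by (simp add: part_def)
  qed
qed

lemma comp_0 [simp]: "comp n ps 0 = []" and comp_Suc_n [simp]: "comp n ps (Suc n) = []"
  unfolding comp_def by simp_all

lemma is_partition_comp:
  "\<forall>x\<in>set ps. is_partition x \<Longrightarrow> length ps = n \<Longrightarrow> is_partition (comp n ps k)"
  unfolding comp_def is_partition_def by auto

definition partition_of :: "(nat \<Rightarrow> nat) \<Rightarrow> nat \<Rightarrow> nat list" where
  "partition_of g m = takeWhile (\<lambda>x. x \<noteq> 0) (map g [1..<Suc m])"

lemma is_partition_partition_of:
  assumes antimono: "\<And>d d'. 1 \<le> d \<Longrightarrow> d \<le> d' \<Longrightarrow> d' \<le> m \<Longrightarrow> g d' \<le> g d"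
  shows "is_partition (partition_of g m)"
proof -
  have "sorted_wrt (\<ge>) (map g [1..<Suc m])"
    unfolding sorted_wrt_iff_nth_less using antimono by (simp del: upt_Suc)
  then have "sorted (rev (partition_of g m))"
    unfolding partition_of_def by (simp add: sorted_wrt_rev)
  moreover have "0 \<notin> set (partition_of g m)"
    unfolding partition_of_def using set_takeWhileD by fastforce
  ultimately show ?thesis unfolding is_partition_def ..
qed

lemma part_partition_of:
  assumes antimono: "\<And>d d'. 1 \<le> d \<Longrightarrow> d \<le> d' \<Longrightarrow> d' \<le> m \<Longrightarrow> g d' \<le> g d"
  shows "part (partition_of g m) d = (if 1 \<le> d \<and> d \<le> m then g d else 0)"
proof -
  define xs where "xs = map g [1..<Suc m]"
  define ys where "ys = takeWhile (\<lambda>x. x \<noteq> 0) xs"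
  have xs_nth: "t < m \<Longrightarrow> xs ! t = g (Suc t)" for t
    unfolding xs_def by (simp del: upt_Suc)
  have len_xs: "length xs = m" unfolding xs_def by simp
  have len: "length ys \<le> m" unfolding ys_def using length_takeWhile_le len_xs by metis
  show ?thesis
  proof (cases "1 \<le> d \<and> d \<le> length ys")
    case True
    then have "d - 1 < length ys" by linarith
    then have "ys ! (d - 1) = xs ! (d - 1)" unfolding ys_def by (rule takeWhile_nth)
    also have "\<dots> = g d" using xs_nth[of "d - 1"] \<open>d - 1 < length ys\<close> len True by simp
    finally show ?thesis
      unfolding partition_of_def xs_def[symmetric] ys_def[symmetric] part_def
      using len True by simp
  next
    case False
    have "g d = 0" if "length ys < d" "d \<le> m"
    proof -
      have "length ys < length xs" using that len_xs by simp
      then have "\<not> xs ! length ys \<noteq> 0" unfolding ys_def by (rule nth_length_takeWhile)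
      then have "g (Suc (length ys)) = 0" using xs_nth[of "length ys"] that by simp
      then show ?thesis using antimono[of "Suc (length ys)" d] that by simp
    qed
    then show ?thesis
      unfolding partition_of_def xs_def[symmetric] ys_def[symmetric] part_def
      using False by auto
  qed
qed

section \<open>The shape \<open>\<lambda>(c)\<close>\<close>

locale LR_split =
  fixes n :: nat and c :: "nat \<Rightarrow> nat"
  assumes LR_union: "Lset n c \<union> Rset n c = {1..Suc n}"
    and LR_disjoint: "Lset n c \<inter> Rset n c = {}"
    and one_in_L: "1 \<in> Lset n c"
    and top_in_R: "Suc n \<in> Rset n c"
begin

abbreviation "L \<equiv> Lset n c"
abbreviation "R \<equiv> Rset n c"
abbreviation "p \<equiv> card L"
abbreviation "q \<equiv> card R"
abbreviation "la \<equiv> lam n c"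
abbreviation "ell \<equiv> sorted_list_of_set L"

definition rankL :: "nat \<Rightarrow> nat" where
  "rankL k = card {l \<in> L. l \<le> k}"

lemma L_subset: "L \<subseteq> {1..Suc n}" and R_subset: "R \<subseteq> {1..Suc n}"
  using LR_union by blast+

lemma finite_L: "finite L" and finite_R: "finite R"
  using L_subset R_subset finite_subset by blast+

lemma n_pos: "1 \<le> n"
  using one_in_L top_in_R LR_disjoint by (cases n) auto

lemma card_L_plus_card_R: "p + q = Suc n"
  using card_Un_disjoint[OF finite_L finite_R LR_disjoint] LR_union by simp

lemma rankL_plus_rankR: "k \<le> Suc n \<Longrightarrow> rankL k + card {r \<in> R. r \<le> k} = k"
proof -
  assume k: "k \<le> Suc n"
  have "{l \<in> L. l \<le> k} \<union> {r \<in> R. r \<le> k} = (L \<union> R) \<inter> {..k}" by blast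
  also have "\<dots> = {1..k}" using LR_union k by auto
  finally have "card {1..k} = card ({l \<in> L. l \<le> k} \<union> {r \<in> R. r \<le> k})" by simp
  also have "\<dots> = rankL k + card {r \<in> R. r \<le> k}"
    unfolding rankL_def using finite_L finite_R LR_disjoint by (intro card_Un_disjoint) auto
  finally show ?thesis by simp
qed

lemma rankL_0 [simp]: "rankL 0 = 0"
proof -
  have "{l \<in> L. l \<le> 0} = {}" using L_subset by auto
  then show ?thesis unfolding rankL_def by simp
qed

lemma rankL_Suc: "rankL (Suc k) = (if Suc k \<in> L then Suc (rankL k) else rankL k)"
proof -
  have "{l \<in> L. l \<le> Suc k} = (if Suc k \<in> L then insert (Suc k) {l \<in> L. l \<le> k} else {l \<in> L. l \<le> k})"
    by (auto simp: le_Suc_eq)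
  then show ?thesis unfolding rankL_def using finite_L by simp
qed

lemma rankL_mono: "k \<le> k' \<Longrightarrow> rankL k \<le> rankL k'"
  unfolding rankL_def using finite_L by (intro card_mono) auto

lemma rankL_le_card: "rankL k \<le> p"
  unfolding rankL_def using finite_L by (intro card_mono) auto

lemma rankL_n: "rankL n = p"
proof -
  have "Suc n \<notin> L" using top_in_R LR_disjoint by blast
  then have "{l \<in> L. l \<le> n} = L" using L_subset by (force simp: le_Suc_eq)
  then show ?thesis unfolding rankL_def by simp
qed

lemma rankL_1: "rankL 1 = 1"
  using rankL_Suc[of 0] one_in_L by simp

lemma rankL_pos: "1 \<le> k \<Longrightarrow> 1 \<le> rankL k"
  using rankL_mono[of 1 k] rankL_1 by simp

lemma less_q_plus_rankL: "k \<le> n \<Longrightarrow> k < q + rankL k"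
proof -
  assume "k \<le> n"
  then have "Suc n \<notin> {r \<in> R. r \<le> k}" by simp
  then have "{r \<in> R. r \<le> k} \<subset> R" using top_in_R by blast
  then have "card {r \<in> R. r \<le> k} < q" by (rule psubset_card_mono[OF finite_R])
  with rankL_plus_rankR[of k] \<open>k \<le> n\<close> show ?thesis by simp
qed

lemma rankL_nth_L: "m < p \<Longrightarrow> rankL (ell ! m) = Suc m"
  unfolding rankL_def using card_le_nth_sorted[of ell m] finite_L by simp

lemma nth_L_le_iff: assumes "m < p" shows "ell ! m \<le> k \<longleftrightarrow> Suc m \<le> rankL k"
proof
  assume "ell ! m \<le> k"
  then show "Suc m \<le> rankL k" using rankL_mono rankL_nth_L[OF assms] by metis
next
  have "ell ! m \<in> L" using assms finite_L by (metis length_sorted_list_of_set nth_mem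
        set_sorted_list_of_set)
  then obtain l where l: "ell ! m = Suc l" "Suc l \<in> L" using L_subset by (cases "ell ! m") auto
  then have "rankL l = m" using rankL_Suc[of l] rankL_nth_L[OF assms] by simp
  moreover assume "Suc m \<le> rankL k"
  ultimately show "ell ! m \<le> k" using rankL_mono[of k l] l by (cases "k \<le> l") auto
qed

lemma length_lam: "length la = p"
  unfolding lam_def using finite_L by simp

lemma part_lam_plus_nth_L:
  assumes "1 \<le> i" "i \<le> p"
  shows "part la i + ell ! (i - 1) = q + i" and "i \<le> ell ! (i - 1)"
proof -
  define l where "l = ell ! (i - 1)"
  have "i - 1 < length ell" using assms finite_L by simp
  then have "l \<in> L" unfolding l_def using finite_L by (metis nth_mem set_sorted_list_of_set)
  then have l_le: "l \<le> Suc n" using L_subset by auto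
  have rank: "rankL l = i" unfolding l_def using rankL_nth_L[of "i - 1"] assms by simp
  have "card ({r \<in> R. r \<le> l} \<union> {r \<in> R. l < r}) = card {r \<in> R. r \<le> l} + card {r \<in> R. l < r}"
    using finite_R by (intro card_Un_disjoint) auto
  moreover have "{r \<in> R. r \<le> l} \<union> {r \<in> R. l < r} = R" by auto
  ultimately have "q = card {r \<in> R. r \<le> l} + card {r \<in> R. l < r}" by simp
  moreover have "part la i = card {r \<in> R. l < r}"
    unfolding part_def l_def lam_def using assms finite_L by simp
  ultimately show "part la i + l = q + i" "i \<le> l"
    using rankL_plus_rankR[OF l_le] rank by linarith+
qed

lemma Fer_lam_iff: "(i, j) \<in> Fer la \<longleftrightarrow> 1 \<le> i \<and> 1 \<le> j \<and> i \<le> rankL (q + i - j)"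
proof (cases "1 \<le> i \<and> i \<le> p")
  case True
  then have "(i, j) \<in> Fer la \<longleftrightarrow> 1 \<le> j \<and> ell ! (i - 1) \<le> q + i - j"
    unfolding Fer_def using part_lam_plus_nth_L[of i] by auto
  also have "\<dots> \<longleftrightarrow> 1 \<le> j \<and> i \<le> rankL (q + i - j)"
  proof -
    have "i - 1 < p" using True by linarith
    then show ?thesis using nth_L_le_iff[of "i - 1" "q + i - j"] True by simp
  qed
  finally show ?thesis using True by simp
next
  case False
  then have "part la i = 0" using length_lam unfolding part_def by auto
  then show ?thesis unfolding Fer_def using False rankL_le_card[of "q + i - j"] by auto
qed

lemma first_part_lam: "part la 1 = q"
proof -
  have "L \<noteq> {}" using one_in_L by blast
  then have "1 \<le> p" using finite_L by (simp add: Suc_le_eq card_gt_0_iff)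
  then have "ell ! 0 \<le> 1" using nth_L_le_iff[of 0 1] rankL_1 by simp
  then show ?thesis using part_lam_plus_nth_L[OF order_refl \<open>1 \<le> p\<close>] by simp
qed

lemma Fer_lam_bounds:
  assumes "(i, j) \<in> Fer la"
  shows "1 \<le> i" "1 \<le> j" "i \<le> rankL (q + i - j)" "j < q + i" "1 \<le> q + i - j" "q + i - j \<le> n"
proof -
  show ij: "1 \<le> i" "1 \<le> j" "i \<le> rankL (q + i - j)" using assms Fer_lam_iff by auto
  then have "rankL (q + i - j) \<noteq> 0" by linarith
  then have "q + i - j \<noteq> 0" by (rule contrapos_nn) simp
  then show "j < q + i" "1 \<le> q + i - j" by auto
  show "q + i - j \<le> n"
    using ij rankL_le_card[of "q + i - j"] card_L_plus_card_R by linarith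
qed

definition diag_len :: "nat \<Rightarrow> nat" where
  "diag_len k = min (rankL k) (q + rankL k - k)"

definition box :: "nat \<Rightarrow> nat \<Rightarrow> nat \<times> nat" where
  "box k d = (rankL k + 1 - d, q + (rankL k + 1 - d) - k)"

definition is_coord :: "nat \<Rightarrow> nat \<Rightarrow> bool" where
  "is_coord k d \<longleftrightarrow> 1 \<le> k \<and> k \<le> n \<and> 1 \<le> d \<and> d \<le> diag_len k"

lemma diag_len_n: "diag_len n = 1"
  unfolding diag_len_def min_def using rankL_n rankL_pos[OF n_pos] card_L_plus_card_R by arith

lemma Dk_lam:
  assumes "1 \<le> k" "k \<le> n"
  shows "Dk la k = (\<lambda>i. (i, q + i - k)) ` {i. 1 \<le> i \<and> k < q + i \<and> i \<le> rankL k}"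
proof (intro set_eqI iffI)
  fix b assume "b \<in> Dk la k"
  then obtain i j where b: "b = (i, j)" "(i, j) \<in> Fer la" "int q + int i - int j = int k"
    unfolding Dk_def first_part_lam by auto
  then have "j = q + i - k" "k < q + i" using Fer_lam_bounds[OF b(2)] by linarith+
  with b Fer_lam_bounds[OF b(2)]
  show "b \<in> (\<lambda>i. (i, q + i - k)) ` {i. 1 \<le> i \<and> k < q + i \<and> i \<le> rankL k}" by force
next
  fix b assume "b \<in> (\<lambda>i. (i, q + i - k)) ` {i. 1 \<le> i \<and> k < q + i \<and> i \<le> rankL k}"
  then obtain i where "b = (i, q + i - k)" "1 \<le> i" "k < q + i" "i \<le> rankL k" by auto
  then show "b \<in> Dk la k" unfolding Dk_def Fer_lam_iff first_part_lam by auto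
qed

lemma delta_lam: "1 \<le> k \<Longrightarrow> k \<le> n \<Longrightarrow> delta la k = diag_len k"
proof -
  assume k: "1 \<le> k" "k \<le> n"
  define S where "S = {i. 1 \<le> i \<and> k < q + i \<and> i \<le> rankL k}"
  have "delta la k = Max ((\<lambda>i. min i (q + i - k)) ` S)"
    unfolding delta_def Dk_lam[OF k] S_def by (simp add: image_image)
  also have "\<dots> = min (rankL k) (q + rankL k - k)"
  proof (rule Max_eqI)
    show "finite ((\<lambda>i. min i (q + i - k)) ` S)" unfolding S_def by simp
    show "y \<le> min (rankL k) (q + rankL k - k)" if "y \<in> (\<lambda>i. min i (q + i - k)) ` S" for y
      using that unfolding S_def by auto
    show "min (rankL k) (q + rankL k - k) \<in> (\<lambda>i. min i (q + i - k)) ` S"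
      unfolding S_def using rankL_pos[OF k(1)] less_q_plus_rankL[OF k(2)] by auto
  qed
  finally show ?thesis unfolding diag_len_def .
qed

lemma coord_lam:
  assumes "(i, j) \<in> Fer la"
  shows "coord la (i, j) = (q + i - j, rankL (q + i - j) + 1 - i)"
proof -
  define k where "k = q + i - j"
  have "delta la k = diag_len k" unfolding k_def using Fer_lam_bounds[OF assms] delta_lam by simp
  moreover have "diag_len k - min i j + 1 = rankL k + 1 - i"
    unfolding diag_len_def k_def using Fer_lam_bounds[OF assms] by (simp add: min_def; arith)
  ultimately show ?thesis unfolding coord_def Let_def k_def first_part_lam by simp
qed

lemma box_in_Fer:
  assumes "is_coord k d"
  shows "box k d \<in> Fer la" and "coord la (box k d) = (k, d)"
proof -
  define i where "i = rankL k + 1 - d"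
  have i: "1 \<le> i" "i \<le> rankL k" "k < q + i"
    using assms less_q_plus_rankL[of k] unfolding i_def is_coord_def diag_len_def by auto
  then have "q + i - (q + i - k) = k" by simp
  then have "(i, q + i - k) \<in> Fer la" unfolding Fer_lam_iff using i by simp
  moreover have "box k d = (i, q + i - k)" unfolding box_def i_def by simp
  ultimately show "box k d \<in> Fer la" "coord la (box k d) = (k, d)"
    using \<open>q + i - (q + i - k) = k\<close> assms unfolding i_def is_coord_def diag_len_def
    by (auto simp: coord_lam)
qed

lemma Fer_lam_box:
  assumes "(i, j) \<in> Fer la"
  shows "is_coord (q + i - j) (rankL (q + i - j) + 1 - i)"
    and "box (q + i - j) (rankL (q + i - j) + 1 - i) = (i, j)"
  using Fer_lam_bounds[OF assms] unfolding is_coord_def diag_len_def box_def by auto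

lemma Phi_Fer:
  "(i, j) \<in> Fer la \<Longrightarrow> Phi n c ps (i, j) = part (comp n ps (q + i - j)) (rankL (q + i - j) + 1 - i)"
  unfolding Phi_def by (simp add: coord_lam)

lemma Phi_box: "is_coord k d \<Longrightarrow> Phi n c ps (box k d) = part (comp n ps k) d"
  unfolding Phi_def using box_in_Fer by simp

section \<open>Storable tuples and reverse plane partitions\<close>

text \<open>The conditions of \<open>ST(c)\<close> at \<open>i\<close> and at \<open>i + 1\<close> both constrain the pair
  \<open>(\<pi>\<^sup>i, \<pi>\<^sup>i\<^sup>+\<^sup>1)\<close>, and they agree because \<open>i \<in> R[-1]\<close> iff \<open>i + 1 \<notin> L\<close>.\<close>
definition linked :: "nat list list \<Rightarrow> nat \<Rightarrow> bool" where
  "linked ps k \<longleftrightarrow>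
     (if Suc k \<in> L then storable (comp n ps (Suc k)) (comp n ps k)
      else storable (comp n ps k) (comp n ps (Suc k)))"

lemma shifted_R_iff:
  assumes "1 \<le> i" "i \<le> n" shows "i \<in> (\<lambda>r. r - 1) ` R \<longleftrightarrow> Suc i \<notin> L"
proof
  assume "i \<in> (\<lambda>r. r - 1) ` R"
  then obtain r where r: "r \<in> R" "i = r - 1" by blast
  have "1 \<le> r" using R_subset r(1) by auto
  then have "r = Suc i" using r(2) assms(1) by linarith
  then have "Suc i \<in> R" using r(1) by simp
  then show "Suc i \<notin> L" using LR_disjoint by blast
next
  assume "Suc i \<notin> L"
  moreover have "Suc i \<in> L \<union> R" using LR_union assms(2) by simp
  ultimately have "Suc i \<in> R" by blast
  then show "i \<in> (\<lambda>r. r - 1) ` R" by (rule rev_image_eqI) simp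
qed

lemma storable3_iff_linked:
  assumes "1 \<le> i" "i \<le> n"
  shows "storable3 (if i \<in> L then BMinus else BPlus)
           (if i \<in> (\<lambda>r. r - 1) ` R then BMinus else BPlus)
           (comp n ps (i - 1)) (comp n ps i) (comp n ps (i + 1))
         \<longleftrightarrow> linked ps (i - 1) \<and> linked ps i"
proof -
  have "Suc (i - 1) = i" using assms(1) by simp
  then show ?thesis unfolding storable3_def linked_def shifted_R_iff[OF assms] by simp
qed

lemma ST_iff:
  "ps \<in> ST n c \<longleftrightarrow> length ps = n \<and> (\<forall>x\<in>set ps. is_partition x) \<and> (\<forall>k\<le>n. linked ps k)"
proof -
  have "Min L = 1"
    using L_subset by (intro Min_eqI[OF finite_L _ one_in_L]) (simp add: subset_iff)
  moreover have "Max R = Suc n"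
    using R_subset by (intro Max_eqI[OF finite_R _ top_in_R]) (simp add: subset_iff)
  ultimately have "{1..n} \<subseteq> {Min L..Max R}" by simp
  then have no_vacuous: "\<forall>k\<in>{1..n}. k \<notin> {Min L..Max R} \<longrightarrow> comp n ps k = []" by blast
  have "(\<forall>k\<le>n. linked ps k) \<longleftrightarrow> (\<forall>i\<in>{1..n}. linked ps (i - 1) \<and> linked ps i)"
  proof (intro iffI allI ballI impI)
    fix k assume all: "\<forall>i\<in>{1..n}. linked ps (i - 1) \<and> linked ps i" and "k \<le> n"
    then have "linked ps (max 1 k - 1) \<and> linked ps (max 1 k)" using n_pos by simp
    then show "linked ps k" by (cases "k = 0") simp_all
  next
    fix i assume all: "\<forall>k\<le>n. linked ps k" and "i \<in> {1..n}"
    then have "i - 1 \<le> n" "i \<le> n" by auto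
    then show "linked ps (i - 1) \<and> linked ps i" using all by blast
  qed
  also have "\<dots> \<longleftrightarrow> (\<forall>i\<in>{1..n}. storable3 (if i \<in> L then BMinus else BPlus)
           (if i \<in> (\<lambda>r. r - 1) ` R then BMinus else BPlus)
           (comp n ps (i - 1)) (comp n ps i) (comp n ps (i + 1)))"
    using storable3_iff_linked by simp
  finally show ?thesis unfolding ST_def using no_vacuous by blast
qed

lemma Phi_right_step:
  assumes ps: "ps \<in> ST n c" and F: "(i, Suc j) \<in> Fer la" and "1 \<le> j"
  shows "(i, j) \<in> Fer la \<and> Phi n c ps (i, j) \<le> Phi n c ps (i, Suc j)"
proof
  define k where "k = q + i - Suc j"
  have k: "k \<le> n" "Suc j < q + i" "1 \<le> i" "i \<le> rankL k"
    using Fer_lam_bounds[OF F] unfolding k_def by auto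
  have Sk: "q + i - j = Suc k" unfolding k_def using k(2) by simp
  show F': "(i, j) \<in> Fer la"
    unfolding Fer_lam_iff Sk using k rankL_mono[of k "Suc k"] \<open>1 \<le> j\<close> by simp
  define d where "d = rankL k + 1 - i"
  have "1 \<le> d" unfolding d_def using k(4) by simp
  have Phi: "Phi n c ps (i, Suc j) = part (comp n ps k) d"
    "Phi n c ps (i, j) = part (comp n ps (Suc k)) (rankL (Suc k) + 1 - i)"
    unfolding Phi_Fer[OF F] Phi_Fer[OF F'] Sk d_def k_def by simp_all
  have "linked ps k" using ps k(1) unfolding ST_iff by simp
  show "Phi n c ps (i, j) \<le> Phi n c ps (i, Suc j)"
  proof (cases "Suc k \<in> L")
    case True
    then have "rankL (Suc k) + 1 - i = Suc d" unfolding d_def using k(4) by (simp add: rankL_Suc)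
    then show ?thesis unfolding Phi using storable_ge_Suc[OF _ \<open>1 \<le> d\<close>] \<open>linked ps k\<close> True
      by (simp add: linked_def)
  next
    case False
    then have "rankL (Suc k) + 1 - i = d" unfolding d_def by (simp add: rankL_Suc)
    then show ?thesis unfolding Phi using storable_le[OF _ \<open>1 \<le> d\<close>] \<open>linked ps k\<close> False
      by (simp add: linked_def)
  qed
qed

lemma Phi_down_step:
  assumes ps: "ps \<in> ST n c" and F: "(Suc i, j) \<in> Fer la" and "1 \<le> i"
  shows "(i, j) \<in> Fer la \<and> Phi n c ps (i, j) \<le> Phi n c ps (Suc i, j)"
proof
  define k where "k = q + i - j"
  have "q + Suc i - j = Suc k" unfolding k_def using Fer_lam_bounds(4)[OF F] by simp
  then have k: "Suc k \<le> n" "Suc i \<le> rankL (Suc k)"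
    using Fer_lam_bounds(3,6)[OF F] by simp_all
  then have "i \<le> rankL k" using rankL_Suc[of k] by (simp split: if_splits)
  then show F': "(i, j) \<in> Fer la"
    unfolding Fer_lam_iff k_def[symmetric] using Fer_lam_bounds(2)[OF F] \<open>1 \<le> i\<close> by simp
  define d where "d = rankL (Suc k) - i"
  have "1 \<le> d" unfolding d_def using k(2) by simp
  have Phi: "Phi n c ps (Suc i, j) = part (comp n ps (Suc k)) d"
    "Phi n c ps (i, j) = part (comp n ps k) (rankL k + 1 - i)"
    unfolding Phi_Fer[OF F] Phi_Fer[OF F'] \<open>q + Suc i - j = Suc k\<close> d_def k_def by simp_all
  have "linked ps k" using ps k(1) unfolding ST_iff by simp
  show "Phi n c ps (i, j) \<le> Phi n c ps (Suc i, j)"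
  proof (cases "Suc k \<in> L")
    case True
    then have "rankL k + 1 - i = d" unfolding d_def by (simp add: rankL_Suc)
    then show ?thesis unfolding Phi using storable_le[OF _ \<open>1 \<le> d\<close>] \<open>linked ps k\<close> True
      by (simp add: linked_def)
  next
    case False
    then have "rankL k + 1 - i = Suc d" unfolding d_def using k(2) by (simp add: rankL_Suc)
    then show ?thesis unfolding Phi using storable_ge_Suc[OF _ \<open>1 \<le> d\<close>] \<open>linked ps k\<close> False
      by (simp add: linked_def)
  qed
qed

lemma Phi_in_RPP:
  assumes "ps \<in> ST n c" shows "Phi n c ps \<in> RPP la"
  unfolding RPP_def
proof (intro CollectI conjI allI impI)
  show "Phi n c ps b = 0" if "b \<notin> Fer la" for b
    using that unfolding Phi_def by simp
  show "Phi n c ps (i, j) \<le> Phi n c ps (i', j')"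
    if "(i, j) \<in> Fer la" "(i', j') \<in> Fer la" "i \<le> i'" "j \<le> j'" for i j i' j'
    using mono_grid[OF Phi_right_step[OF assms] Phi_down_step[OF assms]] Fer_lam_bounds[OF that(1)]
      that by blast
qed

lemma part_comp_beyond_rankL:
  assumes linked: "\<forall>k\<le>n. linked ps k"
  shows "k \<le> n \<Longrightarrow> rankL k < d \<Longrightarrow> part (comp n ps k) d = 0"
proof (induction k arbitrary: d)
  case (Suc k)
  have "linked ps k" using linked Suc.prems(1) by simp
  show ?case
  proof (cases "Suc k \<in> L")
    case True
    then have st: "storable (comp n ps (Suc k)) (comp n ps k)"
      using \<open>linked ps k\<close> by (simp add: linked_def)
    obtain d' where d: "d = Suc d'" "rankL k < d'"
      using Suc.prems(2) True by (cases d) (simp_all add: rankL_Suc)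
    then have "part (comp n ps (Suc k)) d \<le> part (comp n ps k) d'"
      using storable_ge_Suc[OF st, of d'] by simp
    moreover have "part (comp n ps k) d' = 0" using Suc.IH Suc.prems(1) d(2) by simp
    ultimately show ?thesis by simp
  next
    case False
    then have st: "storable (comp n ps k) (comp n ps (Suc k))"
      using \<open>linked ps k\<close> by (simp add: linked_def)
    have "rankL k < d" using Suc.prems(2) False by (simp add: rankL_Suc)
    then have "part (comp n ps (Suc k)) d \<le> part (comp n ps k) d"
      using storable_le[OF st, of d] by simp
    moreover have "part (comp n ps k) d = 0" using Suc.IH Suc.prems(1) \<open>rankL k < d\<close> by simp
    ultimately show ?thesis by simp
  qed
qed simp

lemma part_comp_beyond_corank:
  assumes linked: "\<forall>k\<le>n. linked ps k"
  shows "k \<le> Suc n \<Longrightarrow> q + rankL k - k < d \<Longrightarrow> part (comp n ps k) d = 0"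
proof (induction k arbitrary: d rule: inc_induct)
  case (step k)
  then have "linked ps k" "k < q + rankL k" using linked less_q_plus_rankL by simp_all
  show ?case
  proof (cases "Suc k \<in> L")
    case True
    then have st: "storable (comp n ps (Suc k)) (comp n ps k)"
      using \<open>linked ps k\<close> by (simp add: linked_def)
    have "q + rankL (Suc k) - Suc k < d" using step.prems True by (simp add: rankL_Suc)
    then have "part (comp n ps k) d \<le> part (comp n ps (Suc k)) d"
      using storable_le[OF st, of d] by simp
    moreover have "part (comp n ps (Suc k)) d = 0"
      using step.IH \<open>q + rankL (Suc k) - Suc k < d\<close> by simp
    ultimately show ?thesis by simp
  next
    case False
    then have st: "storable (comp n ps k) (comp n ps (Suc k))"
      using \<open>linked ps k\<close> by (simp add: linked_def)
    obtain d' where d: "d = Suc d'" "q + rankL (Suc k) - Suc k < d'"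
      using step.prems \<open>k < q + rankL k\<close> False by (cases d) (simp_all add: rankL_Suc)
    then have "part (comp n ps k) d \<le> part (comp n ps (Suc k)) d'"
      using storable_ge_Suc[OF st, of d'] by simp
    moreover have "part (comp n ps (Suc k)) d' = 0" using step.IH d(2) by simp
    ultimately show ?thesis by simp
  qed
qed simp

lemma part_comp_beyond_diag_len:
  "ps \<in> ST n c \<Longrightarrow> k \<le> n \<Longrightarrow> diag_len k < d \<Longrightarrow> part (comp n ps k) d = 0"
  unfolding ST_iff diag_len_def
  using part_comp_beyond_rankL part_comp_beyond_corank by (metis le_SucI min_less_iff_disj)

lemma inj_on_Phi: "inj_on (Phi n c) (ST n c)"
proof (rule inj_onI)
  fix ps ps' assume ps: "ps \<in> ST n c" and ps': "ps' \<in> ST n c"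
    and eq: "Phi n c ps = Phi n c ps'"
  have comp_eq: "comp n ps k = comp n ps' k" if k: "1 \<le> k" "k \<le> n" for k
  proof (rule partition_eqI)
    show "is_partition (comp n ps k)" "is_partition (comp n ps' k)"
      using ps ps' is_partition_comp unfolding ST_iff by auto
    show "part (comp n ps k) d = part (comp n ps' k) d" for d
    proof (cases "is_coord k d")
      case True
      then show ?thesis using Phi_box[OF True, of ps] Phi_box[OF True, of ps'] eq by simp
    next
      case False
      then consider "d = 0" | "diag_len k < d" using k unfolding is_coord_def by linarith
      then show ?thesis
      proof cases
        case 2
        then show ?thesis
          using part_comp_beyond_diag_len[OF ps k(2)] part_comp_beyond_diag_len[OF ps' k(2)] by simp
      qed (simp add: part_def)
    qed
  qed
  have len: "length ps = n" "length ps' = n" using ps ps' unfolding ST_iff by simp_all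
  show "ps = ps'"
  proof (rule nth_equalityI)
    show "length ps = length ps'" using len by simp
    fix t assume "t < length ps"
    then have "comp n ps (Suc t) = comp n ps' (Suc t)" using comp_eq len by simp
    then show "ps ! t = ps' ! t" using \<open>t < length ps\<close> len unfolding comp_def by simp
  qed
qed

definition tuple_of_filling :: "(nat \<times> nat \<Rightarrow> nat) \<Rightarrow> nat list list" where
  "tuple_of_filling f = map (\<lambda>k. partition_of (\<lambda>d. f (box k d)) (diag_len k)) [1..<Suc n]"

lemma RPP_mono:
  "f \<in> RPP la \<Longrightarrow> (i, j) \<in> Fer la \<Longrightarrow> (i', j') \<in> Fer la \<Longrightarrow> i \<le> i' \<Longrightarrow> j \<le> j'
    \<Longrightarrow> f (i, j) \<le> f (i', j')"
  unfolding RPP_def by blast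

lemma RPP_outside: "f \<in> RPP la \<Longrightarrow> b \<notin> Fer la \<Longrightarrow> f b = 0"
  unfolding RPP_def by blast

lemma RPP_box_mono:
  assumes "f \<in> RPP la" "is_coord k d" "is_coord k' d'"
    and "fst (box k d) \<le> fst (box k' d')" "snd (box k d) \<le> snd (box k' d')"
  shows "f (box k d) \<le> f (box k' d')"
  using RPP_mono[OF assms(1), of "fst (box k d)" "snd (box k d)" "fst (box k' d')"
      "snd (box k' d')"] box_in_Fer(1)[OF assms(2)] box_in_Fer(1)[OF assms(3)] assms(4,5)
  by simp

lemma RPP_diag_antimono:
  assumes "f \<in> RPP la" "1 \<le> k" "k \<le> n" "1 \<le> d" "d \<le> d'" "d' \<le> diag_len k"
  shows "f (box k d') \<le> f (box k d)"
  using assms(2-6)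
  by (intro RPP_box_mono[OF assms(1)]) (auto simp: is_coord_def box_def diag_len_def)

lemma comp_tuple_of_filling:
  assumes "1 \<le> k" "k \<le> n"
  shows "comp n (tuple_of_filling f) k = partition_of (\<lambda>d. f (box k d)) (diag_len k)"
proof -
  have "k - 1 < n" using assms by linarith
  then have "[1..<Suc n] ! (k - 1) = 1 + (k - 1)" by (intro nth_upt) simp
  with assms have "[1..<Suc n] ! (k - 1) = k" by simp
  then show ?thesis
    unfolding comp_def tuple_of_filling_def using assms \<open>k - 1 < n\<close> by (simp del: upt_Suc)
qed

lemma part_tuple_of_filling:
  assumes f: "f \<in> RPP la"
  shows "part (comp n (tuple_of_filling f) k) d = (if is_coord k d then f (box k d) else 0)"
proof (cases "1 \<le> k \<and> k \<le> n")
  case True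
  then show ?thesis
    unfolding comp_tuple_of_filling[OF True[THEN conjunct1] True[THEN conjunct2]] is_coord_def
    using part_partition_of[OF RPP_diag_antimono[OF f]] True by simp
next
  case False
  then show ?thesis unfolding comp_def is_coord_def by auto
qed

lemma part_tuple_of_filling_le:
  assumes "f \<in> RPP la"
    and "is_coord k d \<Longrightarrow>
      is_coord k' d' \<and> fst (box k d) \<le> fst (box k' d') \<and> snd (box k d) \<le> snd (box k' d')"
  shows "part (comp n (tuple_of_filling f) k) d \<le> part (comp n (tuple_of_filling f) k') d'"
  using assms(2) RPP_box_mono[OF assms(1), of k d k' d']
  unfolding part_tuple_of_filling[OF assms(1)] by auto

text \<open>If \<open>k + 1 \<in> L\<close>, the box \<open>\<langle>k + 1, d\<rangle>\<close> lies just below \<open>\<langle>k, d\<rangle>\<close> and \<open>\<langle>k + 1, d + 1\<rangle>\<close>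
  just left of it.\<close>
lemma storable_tuple_of_filling_in_L:
  assumes f: "f \<in> RPP la" and "k \<le> n" and "Suc k \<in> L"
  shows "storable (comp n (tuple_of_filling f) (Suc k)) (comp n (tuple_of_filling f) k)"
proof -
  have "Suc k \<noteq> Suc n" using assms(3) top_in_R LR_disjoint by blast
  then have Sk: "Suc k \<le> n" using assms(2) by simp
  have rk: "rankL (Suc k) = Suc (rankL k)" using assms(3) by (simp add: rankL_Suc)
  let ?pi = "comp n (tuple_of_filling f)"
  show ?thesis
    unfolding storable_def
  proof (intro allI impI conjI)
    fix d :: nat assume "1 \<le> d"
    show "part (?pi k) d \<le> part (?pi (Suc k)) d"
      by (rule part_tuple_of_filling_le[OF f])
        (use Sk rk in \<open>auto simp: is_coord_def box_def diag_len_def\<close>)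
    show "part (?pi (Suc k)) (Suc d) \<le> part (?pi k) d"
      by (rule part_tuple_of_filling_le[OF f], cases "k = 0")
        (use \<open>1 \<le> d\<close> rk in \<open>auto simp: is_coord_def box_def diag_len_def\<close>)
  qed
qed

text \<open>If \<open>k + 1 \<notin> L\<close>, the box \<open>\<langle>k + 1, d\<rangle>\<close> lies just left of \<open>\<langle>k, d\<rangle>\<close> and just below
  \<open>\<langle>k, d + 1\<rangle>\<close>.\<close>
lemma storable_tuple_of_filling_notin_L:
  assumes f: "f \<in> RPP la" and "k \<le> n" and "Suc k \<notin> L"
  shows "storable (comp n (tuple_of_filling f) k) (comp n (tuple_of_filling f) (Suc k))"
proof -
  have "k \<noteq> 0" using assms(3) one_in_L by (cases k) simp_all
  have rk: "rankL (Suc k) = rankL k" using assms(3) by (simp add: rankL_Suc)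
  let ?pi = "comp n (tuple_of_filling f)"
  show ?thesis
    unfolding storable_def
  proof (intro allI impI conjI)
    fix d :: nat assume "1 \<le> d"
    show "part (?pi (Suc k)) d \<le> part (?pi k) d"
      by (rule part_tuple_of_filling_le[OF f])
        (use \<open>k \<noteq> 0\<close> rk in \<open>auto simp: is_coord_def box_def diag_len_def\<close>)
    show "part (?pi k) (Suc d) \<le> part (?pi (Suc k)) d"
    proof (rule part_tuple_of_filling_le[OF f])
      assume coord: "is_coord k (Suc d)"
      then have "k \<noteq> n" using \<open>1 \<le> d\<close> diag_len_n unfolding is_coord_def by auto
      with coord show "is_coord (Suc k) d \<and> fst (box k (Suc d)) \<le> fst (box (Suc k) d)
          \<and> snd (box k (Suc d)) \<le> snd (box (Suc k) d)"
        using \<open>1 \<le> d\<close> rk by (auto simp: is_coord_def box_def diag_len_def)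
    qed
  qed
qed

lemma linked_tuple_of_filling: "f \<in> RPP la \<Longrightarrow> k \<le> n \<Longrightarrow> linked (tuple_of_filling f) k"
  unfolding linked_def
  using storable_tuple_of_filling_in_L storable_tuple_of_filling_notin_L by simp

lemma tuple_of_filling_in_ST:
  assumes f: "f \<in> RPP la" shows "tuple_of_filling f \<in> ST n c"
  unfolding ST_iff
proof (intro conjI ballI allI impI)
  show "length (tuple_of_filling f) = n" by (simp add: tuple_of_filling_def)
next
  fix x assume "x \<in> set (tuple_of_filling f)"
  then obtain k where k: "1 \<le> k" "k \<le> n" and x: "x = partition_of (\<lambda>d. f (box k d)) (diag_len k)"
    unfolding tuple_of_filling_def by auto
  show "is_partition x"
    unfolding x using RPP_diag_antimono[OF f k] by (rule is_partition_partition_of)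
next
  fix k assume "k \<le> n"
  then show "linked (tuple_of_filling f) k" by (rule linked_tuple_of_filling[OF f])
qed

lemma Phi_tuple_of_filling:
  assumes f: "f \<in> RPP la" shows "Phi n c (tuple_of_filling f) = f"
proof
  fix b
  show "Phi n c (tuple_of_filling f) b = f b"
  proof (cases "b \<in> Fer la")
    case True
    obtain i j where b: "b = (i, j)" by (cases b)
    with True have "is_coord (q + i - j) (rankL (q + i - j) + 1 - i)"
      and "box (q + i - j) (rankL (q + i - j) + 1 - i) = b"
      using Fer_lam_box by simp_all
    then show ?thesis using Phi_box part_tuple_of_filling[OF f] by metis
  next
    case False
    then show ?thesis using RPP_outside[OF f False] unfolding Phi_def by simp
  qed
qed

lemma bij_betw_Phi: "bij_betw (Phi n c) (ST n c) (RPP la)"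
proof -
  have "RPP la \<subseteq> Phi n c ` ST n c"
  proof
    fix f assume f: "f \<in> RPP la"
    then have "f = Phi n c (tuple_of_filling f)" by (simp add: Phi_tuple_of_filling)
    then show "f \<in> Phi n c ` ST n c" using tuple_of_filling_in_ST[OF f] by (rule image_eqI)
  qed
  moreover have "Phi n c ` ST n c \<subseteq> RPP la" using Phi_in_RPP by blast
  ultimately show ?thesis unfolding bij_betw_def using inj_on_Phi by blast
qed

end

theorem theorem4p11:
  fixes n :: nat and c :: "nat \<Rightarrow> nat"
  assumes "1 \<le> n" and "coxeter_elem n c"
  shows "bij_betw (Phi n c) (ST n c) (RPP (lam n c))"
proof -
  interpret LR_split n c
    using coxeter_Lset_Rset[OF assms] by unfold_locales
  show ?thesis by (rule bij_betw_Phi)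
qed

end
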